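(* Let $\alpha>1$, let $u_0\in L^\infty(0,\infty)$ be nonnegative with compact support, $m_0(\rho)=\int_0^\rho u_0$, $M=\|u_0\|_{L^1}>0$, let $m$ be the viscosity solution of the mass problem with datum $m_0$, and $S(t)=\inf\{\rho: m(t,\rho)=M\}$. Then for all $t>0$ $$0\le\frac{S(t)}{M(\alpha t)^{1/\alpha}}-1\le\frac{S(0)}{M}(\alpha t)^{-1/\alpha},$$ and for every $\varepsilon>0$ $$\sup_{y\ge\varepsilon}\left|\frac{m\big(t,M(\alpha t)^{1/\alpha}y\big)}{M\,G(y)}-1\right|\to0\quad\text{as }t\to+\infty,\qquad G(y)=\begin{cases}y,&y\le1,\\1,&y>1.\end{cases}$$
   Context: The mass problem is $m_t+(m_\rho)_+^\alpha m=0$ ($t,\rho>0$), $m(t,0)=0$, $m(0,\cdot)=m_0$, understood in the viscosity sense (Crandall–Lions, with Fréchet super/subdifferentials), for which there is a unique bounded uniformly continuous viscosity solution for bounded uniformly continuous non-decreasing $m_0$ with $m_0(0)=0$. Here $\rho\ge0$ is the volume variable for radial densities and $u=m_\rho$. *)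

theory Defs
  imports "HOL-Analysis.Analysis"
begin

definition quadrant :: "(real \<times> real) set" where
  "quadrant = {0<..} \<times> {0<..}"

definition frechet_superdiff ::
  "(real \<times> real \<Rightarrow> real) \<Rightarrow> real \<times> real \<Rightarrow> (real \<times> real) set" where
  "frechet_superdiff w z = {(a, b). \<forall>e>0. \<exists>d>0. \<forall>s r. (s, r) \<in> quadrant \<and> dist (s, r) z < d \<longrightarrow>
      w (s, r) - w z - a * (s - fst z) - b * (r - snd z) \<le> e * dist (s, r) z}"

definition frechet_subdiff ::
  "(real \<times> real \<Rightarrow> real) \<Rightarrow> real \<times> real \<Rightarrow> (real \<times> real) set" where
  "frechet_subdiff w z = {(a, b). \<forall>e>0. \<exists>d>0. \<forall>s r. (s, r) \<in> quadrant \<and> dist (s, r) z < d \<longrightarrow>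
      w (s, r) - w z - a * (s - fst z) - b * (r - snd z) \<ge> - e * dist (s, r) z}"

text \<open>Viscosity (Crandall--Lions) solution of m_t + (m_rho)_+^alpha m = 0 in (0,\<infinity>)^2,
  for a function continuous on [0,\<infinity>)^2.\<close>
definition mass_visc_sol :: "real \<Rightarrow> (real \<Rightarrow> real \<Rightarrow> real) \<Rightarrow> bool" where
  "mass_visc_sol \<alpha> m \<longleftrightarrow>
     continuous_on ({0..} \<times> {0..}) (\<lambda>(t, \<rho>). m t \<rho>) \<and>
     (\<forall>z\<in>quadrant. \<forall>(a, b)\<in>frechet_superdiff (\<lambda>(t, \<rho>). m t \<rho>) z.
        a + (max b 0) powr \<alpha> * m (fst z) (snd z) \<le> 0) \<and>
     (\<forall>z\<in>quadrant. \<forall>(a, b)\<in>frechet_subdiff (\<lambda>(t, \<rho>). m t \<rho>) z.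
        a + (max b 0) powr \<alpha> * m (fst z) (snd z) \<ge> 0)"

definition mass_problem_solution ::
  "real \<Rightarrow> (real \<Rightarrow> real) \<Rightarrow> (real \<Rightarrow> real \<Rightarrow> real) \<Rightarrow> bool" where
  "mass_problem_solution \<alpha> m0 m \<longleftrightarrow>
     mass_visc_sol \<alpha> m \<and>
     uniformly_continuous_on ({0..} \<times> {0..}) (\<lambda>(t, \<rho>). m t \<rho>) \<and>
     bounded ((\<lambda>(t, \<rho>). m t \<rho>) ` ({0..} \<times> {0..})) \<and>
     (\<forall>t\<ge>0. m t 0 = 0) \<and>
     (\<forall>\<rho>\<ge>0. m 0 \<rho> = m0 \<rho>)"

definition G_profile :: "real \<Rightarrow> real" where
  "G_profile y = (if y \<le> 1 then y else 1)"

end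

theory Submission
  imports Defs
begin

text \<open>Both estimates follow by comparing \<open>m\<close> with explicit barriers built from
  \<open>L(t) = (\<alpha> t) powr (-1/\<alpha>)\<close>. The function \<open>min (\<rho> L(t + \<tau>)) M\<close> is a supersolution, above the
  datum once \<open>L(\<tau>)\<close> bounds its slope; \<open>M G((\<rho> - S(0)) L(t + \<tau>) / M)\<close>, with the corner of \<open>G\<close>
  rounded off, is a subsolution below it. Sending \<open>\<tau>\<close> to \<open>0\<close> gives, for \<open>t > 0\<close>,
  \<open>M G((\<rho> - S(0)) L(t) / M) \<le> m(t, \<rho>) \<le> M G(\<rho> L(t) / M)\<close>. These bounds confine the front
  \<open>S(t)\<close> to \<open>[M / L(t), S(0) + M / L(t)]\<close>, and since \<open>S(0) L(t) \<rightarrow> 0\<close> they squeeze the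
  rescaled profile onto \<open>M G\<close>. Comparison is proved directly: the maximum of \<open>m\<close> minus a barrier,
  penalised linearly so that it exists and lies off the boundary, would make the barrier a test
  function violating the viscosity inequality.\<close>

section \<open>Test functions and penalised maxima\<close>

lemma frechet_subdiff_iff_superdiff_uminus:
  "(a, b) \<in> frechet_subdiff w z \<longleftrightarrow> (- a, - b) \<in> frechet_superdiff (\<lambda>x. - w x) z"
  unfolding frechet_subdiff_def frechet_superdiff_def by (simp add: algebra_simps)

lemma frechet_superdiff_at_max:
  fixes w P :: "real \<times> real \<Rightarrow> real"
  assumes z: "z \<in> quadrant"
    and P: "(P has_derivative (\<lambda>h. a * fst h + b * snd h)) (at z)"
    and max: "\<And>x. x \<in> quadrant \<Longrightarrow> w x - P x \<le> w z - P z"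
  shows "(a, b) \<in> frechet_superdiff w z"
  unfolding frechet_superdiff_def
proof (clarify)
  fix e :: real assume "e > 0"
  with P obtain d where "d > 0" and d: "\<And>y. norm (y - z) < d \<Longrightarrow>
      norm (P y - P z - (a * fst (y - z) + b * snd (y - z))) \<le> e * norm (y - z)"
    unfolding has_derivative_at_alt by blast
  have "w (s, r) - w z - a * (s - fst z) - b * (r - snd z) \<le> e * dist (s, r) z"
    if "(s, r) \<in> quadrant" "dist (s, r) z < d" for s r
    using d[of "(s, r)"] max[of "(s, r)"] that by (cases z) (auto simp: dist_norm abs_le_iff)
  with \<open>d > 0\<close> show "\<exists>d>0. \<forall>s r. (s, r) \<in> quadrant \<and> dist (s, r) z < d \<longrightarrow>
      w (s, r) - w z - a * (s - fst z) - b * (r - snd z) \<le> e * dist (s, r) z" by blast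
qed

lemma frechet_subdiff_at_min:
  fixes w P :: "real \<times> real \<Rightarrow> real"
  assumes z: "z \<in> quadrant"
    and P: "(P has_derivative (\<lambda>h. a * fst h + b * snd h)) (at z)"
    and min: "\<And>x. x \<in> quadrant \<Longrightarrow> w z - P z \<le> w x - P x"
  shows "(a, b) \<in> frechet_subdiff w z"
proof -
  have "((\<lambda>x. - P x) has_derivative (\<lambda>h. (- a) * fst h + (- b) * snd h)) (at z)"
    using has_derivative_minus[OF P] by simp
  from frechet_superdiff_at_max[OF z this] min
  show ?thesis unfolding frechet_subdiff_iff_superdiff_uminus by force
qed

lemma continuous_attains_inf_coercive_quadrant:
  fixes F :: "real \<times> real \<Rightarrow> real"
  assumes cont: "continuous_on ({0..} \<times> {0..}) F" and c: "c > 0"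
    and coercive: "\<And>x. x \<in> {0..} \<times> {0..} \<Longrightarrow> c * (fst x + snd x) - K \<le> F x"
  obtains z where "z \<in> {0..} \<times> {0..}" "\<And>x. x \<in> {0..} \<times> {0..} \<Longrightarrow> F z \<le> F x"
proof -
  define R where "R = (\<bar>K\<bar> + \<bar>F (0, 0)\<bar> + 1) / c"
  have R: "R \<ge> 0" "c * R = \<bar>K\<bar> + \<bar>F (0, 0)\<bar> + 1" using c by (simp_all add: R_def)
  have "compact ({0..R} \<times> {0..R})" "{0..R} \<times> {0..R} \<noteq> {}"
    using R(1) by (auto intro: compact_Times)
  moreover have "continuous_on ({0..R} \<times> {0..R}) F"
    by (rule continuous_on_subset[OF cont]) auto
  ultimately obtain z where z: "z \<in> {0..R} \<times> {0..R}"
    and min: "\<And>x. x \<in> {0..R} \<times> {0..R} \<Longrightarrow> F z \<le> F x"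
    using continuous_attains_inf by metis
  have "F z \<le> F x" if x: "x \<in> {0..} \<times> {0..}" for x
  proof (cases "x \<in> {0..R} \<times> {0..R}")
    case False
    then have "c * R \<le> c * (fst x + snd x)" using x c by (auto simp: mem_Times_iff)
    then have "F (0, 0) < F x" using coercive[OF x] R(2) by linarith
    moreover have "F z \<le> F (0, 0)" using min R(1) by simp
    ultimately show ?thesis by simp
  qed (rule min)
  with z that show ?thesis by auto
qed

text \<open>The linear penalisation makes the maximisation coercive; the sign conditions on the
  boundary keep the maximum point off it.\<close>
lemma penalized_max_in_quadrant:
  fixes D :: "real \<times> real \<Rightarrow> real"
  assumes cont: "continuous_on ({0..} \<times> {0..}) D"
    and bound: "\<And>x. x \<in> {0..} \<times> {0..} \<Longrightarrow> D x \<le> K"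
    and x0: "x0 \<in> {0..} \<times> {0..}" "D x0 > 0"
    and initial: "\<And>\<rho>. \<rho> \<ge> 0 \<Longrightarrow> D (0, \<rho>) \<le> 0"
    and boundary: "\<And>t. t \<ge> 0 \<Longrightarrow> D (t, 0) \<le> 0"
  obtains \<epsilon> z where "\<epsilon> > 0" "z \<in> quadrant" "\<epsilon> * (fst z + snd z) < D z"
    "\<And>x. x \<in> quadrant \<Longrightarrow> D x - \<epsilon> * (fst x + snd x) \<le> D z - \<epsilon> * (fst z + snd z)"
proof -
  define n where "n = 1 + fst x0 + snd x0"
  have n: "n > 0" "fst x0 + snd x0 \<le> n" using x0(1) by (auto simp: n_def mem_Times_iff)
  define \<epsilon> where "\<epsilon> = D x0 / (2 * n)"
  have \<epsilon>: "\<epsilon> > 0" using n x0(2) by (simp add: \<epsilon>_def)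
  have x0_above: "\<epsilon> * (fst x0 + snd x0) < D x0"
  proof -
    have "\<epsilon> * (fst x0 + snd x0) \<le> \<epsilon> * n" using \<epsilon> n by simp
    also have "\<dots> < D x0" using n x0(2) by (simp add: \<epsilon>_def)
    finally show ?thesis .
  qed
  define F where "F x = \<epsilon> * (fst x + snd x) - D x" for x
  have "continuous_on ({0..} \<times> {0..}) F"
    unfolding F_def by (intro continuous_intros cont)
  moreover have "\<epsilon> * (fst x + snd x) - K \<le> F x" if "x \<in> {0..} \<times> {0..}" for x
    using bound[OF that] by (simp add: F_def)
  ultimately obtain z where z: "z \<in> {0..} \<times> {0..}"
      and min: "\<And>x. x \<in> {0..} \<times> {0..} \<Longrightarrow> F z \<le> F x"
    using continuous_attains_inf_coercive_quadrant \<epsilon> by metis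
  have neg: "F z < 0" using min[OF x0(1)] x0_above by (simp add: F_def)
  obtain t \<rho> where z_eq: "z = (t, \<rho>)" by fastforce
  have t: "t \<ge> 0" "\<rho> \<ge> 0" using z by (simp_all add: z_eq)
  then have pen: "\<epsilon> * t \<ge> 0" "\<epsilon> * \<rho> \<ge> 0" using \<epsilon> by simp_all
  have "t \<noteq> 0" using neg initial[of \<rho>] pen(2) t by (auto simp: z_eq F_def)
  moreover have "\<rho> \<noteq> 0" using neg boundary[of t] pen(1) t by (auto simp: z_eq F_def)
  ultimately have "z \<in> quadrant" using t by (simp add: z_eq quadrant_def)
  moreover have "D x - \<epsilon> * (fst x + snd x) \<le> D z - \<epsilon> * (fst z + snd z)" if "x \<in> quadrant" for x
    using min[of x] that by (auto simp: quadrant_def F_def)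
  ultimately show ?thesis using that[OF \<epsilon>] neg by (simp add: F_def)
qed

section \<open>Barriers\<close>

text \<open>\<open>L(t) = (\<alpha> t) powr (-1/\<alpha>)\<close> solves \<open>L' = - L powr (\<alpha> + 1)\<close>, so \<open>\<rho> L(t + \<tau>)\<close> solves
  the mass equation exactly; it is the slope of both barriers.\<close>
definition decay_rate :: "real \<Rightarrow> real \<Rightarrow> real" where
  "decay_rate \<alpha> t = (\<alpha> * t) powr (- 1 / \<alpha>)"

context
  fixes \<alpha> :: real assumes \<alpha>: "\<alpha> > 0"
begin

lemma decay_rate_pos: "t > 0 \<Longrightarrow> decay_rate \<alpha> t > 0"
  using \<alpha> by (simp add: decay_rate_def)

lemma decay_rate_powr: "t > 0 \<Longrightarrow> decay_rate \<alpha> t powr \<alpha> = 1 / (\<alpha> * t)"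
  unfolding decay_rate_def powr_powr using \<alpha> by (simp add: powr_minus divide_inverse)

lemma powr_inverse_eq_decay_rate: "(\<alpha> * t) powr (1 / \<alpha>) = 1 / decay_rate \<alpha> t"
  by (simp add: decay_rate_def powr_minus_divide)

lemma has_real_derivative_decay_rate:
  assumes "t > 0" shows "(decay_rate \<alpha> has_real_derivative - decay_rate \<alpha> t / (\<alpha> * t)) (at t)"
proof -
  have "((\<lambda>t. (\<alpha> * t) powr (- 1 / \<alpha>)) has_real_derivative
      (- 1 / \<alpha>) * (\<alpha> * t) powr (- 1 / \<alpha> - 1) * \<alpha>) (at t)"
    using \<alpha> assms by (auto intro!: derivative_eq_intros)
  then show ?thesis using \<alpha> assms by (simp add: decay_rate_def[abs_def] powr_diff)
qed

lemma decay_rate_antimono: "0 < s \<Longrightarrow> s \<le> t \<Longrightarrow> decay_rate \<alpha> t \<le> decay_rate \<alpha> s"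
  using \<alpha> unfolding decay_rate_def by (intro powr_mono2') auto

lemma decay_rate_powr_neg_div: "C > 0 \<Longrightarrow> decay_rate \<alpha> (C powr (- \<alpha>) / \<alpha>) = C"
  using \<alpha> by (simp add: decay_rate_def powr_powr)

lemma decay_rate_tendsto_0: "(decay_rate \<alpha> \<longlongrightarrow> 0) at_top"
  unfolding decay_rate_def[abs_def]
  using \<alpha> by (intro tendsto_neg_powr filterlim_tendsto_pos_mult_at_top[OF tendsto_const] filterlim_ident)
    (auto simp: divide_neg_pos)

lemma has_real_derivative_decay_rate_shift:
  assumes "t + \<tau> > 0"
  shows "((\<lambda>s. decay_rate \<alpha> (s + \<tau>)) has_real_derivative
      - decay_rate \<alpha> (t + \<tau>) / (\<alpha> * (t + \<tau>))) (at t)"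
proof -
  have "((\<lambda>s. s + \<tau>) has_real_derivative 1) (at t)" by (auto intro!: derivative_eq_intros)
  from DERIV_chain2[OF has_real_derivative_decay_rate[OF assms] this] show ?thesis by simp
qed

lemma tendsto_decay_rate_at_right:
  assumes "t > 0" shows "((\<lambda>\<tau>. decay_rate \<alpha> (t + \<tau>)) \<longlongrightarrow> decay_rate \<alpha> t) (at_right 0)"
proof -
  have "((\<lambda>\<tau>. (\<alpha> * (t + \<tau>)) powr (- 1 / \<alpha>)) \<longlongrightarrow> (\<alpha> * (t + 0)) powr (- 1 / \<alpha>)) (at_right 0)"
    using \<alpha> assms by (intro tendsto_intros) auto
  then show ?thesis by (simp add: decay_rate_def)
qed

lemma continuous_on_decay_rate_quadrant:
  "\<tau> > 0 \<Longrightarrow> continuous_on ({0..} \<times> {0..}) (\<lambda>x::real \<times> real. decay_rate \<alpha> (fst x + \<tau>))"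
  unfolding decay_rate_def using \<alpha> by (auto intro!: continuous_intros simp: mem_Times_iff add_pos_nonneg)

end

text \<open>A \<open>C\<^sup>1\<close> concave version of \<open>G_profile\<close>, equal to it outside \<open>[1 - \<delta>, 1 + \<delta>]\<close>:
  the lower barrier must itself serve as a test function, so the kink of \<open>G_profile\<close> at \<open>1\<close>
  is rounded off.\<close>
definition G_smooth :: "real \<Rightarrow> real \<Rightarrow> real" where
  "G_smooth \<delta> y = y - (max (y - (1 - \<delta>)) 0)\<^sup>2 / (4 * \<delta>) + (max (y - (1 + \<delta>)) 0)\<^sup>2 / (4 * \<delta>)"

definition G_smooth_deriv :: "real \<Rightarrow> real \<Rightarrow> real" where
  "G_smooth_deriv \<delta> y = 1 - max (y - (1 - \<delta>)) 0 / (2 * \<delta>) + max (y - (1 + \<delta>)) 0 / (2 * \<delta>)"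

lemma has_real_derivative_pos_part_power2:
  "((\<lambda>x::real. (max x 0)\<^sup>2) has_real_derivative 2 * max x 0) (at x)"
proof (cases x "0::real" rule: linorder_cases)
  case less
  have "((\<lambda>x::real. 0) has_real_derivative 2 * max x 0) (at x)" using less by simp
  then show ?thesis
    by (rule has_field_derivative_transform_within_open[where S = "{..<0}"]) (use less in auto)
next
  case greater
  have "((\<lambda>x::real. x\<^sup>2) has_real_derivative 2 * max x 0) (at x)"
    using greater by (auto intro!: derivative_eq_intros)
  then show ?thesis
    by (rule has_field_derivative_transform_within_open[where S = "{0<..}"]) (use greater in auto)
next
  case equal
  have "((\<lambda>y::real. (max y 0)\<^sup>2 / y) \<longlongrightarrow> 0) (at 0)"
  proof (rule tendsto_sandwich[where f = "\<lambda>y. - \<bar>y\<bar>" and h = "\<lambda>y. \<bar>y\<bar>"])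
    show "\<forall>\<^sub>F y::real in at 0. - \<bar>y\<bar> \<le> (max y 0)\<^sup>2 / y"
      by (intro always_eventually allI) (auto simp: max_def power2_eq_square)
    show "\<forall>\<^sub>F y::real in at 0. (max y 0)\<^sup>2 / y \<le> \<bar>y\<bar>"
      by (intro always_eventually allI) (auto simp: max_def power2_eq_square)
  qed (auto intro!: tendsto_eq_intros)
  then show ?thesis using equal by (simp add: has_field_derivative_iff)
qed

lemma has_real_derivative_G_smooth: "(G_smooth \<delta> has_real_derivative G_smooth_deriv \<delta> y) (at y)"
proof -
  have sq: "((\<lambda>y. (max (y - c) 0)\<^sup>2) has_real_derivative 2 * max (y - c) 0 * 1) (at y)" for c
    by (rule DERIV_chain2[OF has_real_derivative_pos_part_power2]) (auto intro!: derivative_eq_intros)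
  have "((\<lambda>y. y - (max (y - (1 - \<delta>)) 0)\<^sup>2 / (4 * \<delta>) + (max (y - (1 + \<delta>)) 0)\<^sup>2 / (4 * \<delta>))
      has_real_derivative 1 - 2 * max (y - (1 - \<delta>)) 0 * 1 / (4 * \<delta>)
        + 2 * max (y - (1 + \<delta>)) 0 * 1 / (4 * \<delta>)) (at y)"
    by (intro derivative_intros DERIV_cdivide sq)
  then show ?thesis unfolding G_smooth_def[abs_def] G_smooth_deriv_def by (simp add: field_simps)
qed

context
  fixes \<delta> :: real assumes \<delta>: "0 < \<delta>" "\<delta> < 1"
begin

lemma G_smooth_deriv_bounds: "0 \<le> G_smooth_deriv \<delta> y" "G_smooth_deriv \<delta> y \<le> 1"
  using \<delta> unfolding G_smooth_deriv_def by (auto simp: max_def field_simps)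

lemma continuous_on_G_smooth: "continuous_on UNIV (G_smooth \<delta>)"
  unfolding G_smooth_def[abs_def] using \<delta> by (intro continuous_intros) auto

lemma G_smooth_le: "G_smooth \<delta> y \<le> y"
proof -
  have "(max (y - (1 + \<delta>)) 0)\<^sup>2 \<le> (max (y - (1 - \<delta>)) 0)\<^sup>2"
    using \<delta> by (intro power_mono) auto
  then show ?thesis using \<delta> unfolding G_smooth_def by (simp add: divide_right_mono)
qed

lemma G_smooth_bounds: "min y (1 - \<delta>) \<le> G_smooth \<delta> y" "G_smooth \<delta> y \<le> 1"
proof -
  consider "y \<le> 1 - \<delta>" | "1 - \<delta> \<le> y" "y \<le> 1 + \<delta>" | "1 + \<delta> \<le> y" by linarith
  then have "min y (1 - \<delta>) \<le> G_smooth \<delta> y \<and> G_smooth \<delta> y \<le> 1"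
  proof cases
    case 2
    then have G: "G_smooth \<delta> y = y - (y - (1 - \<delta>))\<^sup>2 / (4 * \<delta>)"
      using \<delta> by (simp add: G_smooth_def max_def)
    have "(y - (1 - \<delta>))\<^sup>2 \<le> 4 * \<delta> * (y - (1 - \<delta>))"
      using 2 \<delta> by (simp add: power2_eq_square mult_right_mono)
    then have "1 - \<delta> \<le> G_smooth \<delta> y" using \<delta> unfolding G by (simp add: field_simps)
    moreover have "4 * \<delta> * y - (y - (1 - \<delta>))\<^sup>2 \<le> 4 * \<delta>"
      using zero_le_power2[of "y - (1 + \<delta>)"] by (simp add: power2_eq_square algebra_simps)
    then have "G_smooth \<delta> y \<le> 1" using \<delta> unfolding G by (simp add: field_simps)
    ultimately show ?thesis by simp
  qed (use \<delta> in \<open>auto simp: G_smooth_def max_def field_simps power2_eq_square\<close>)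
  then show "min y (1 - \<delta>) \<le> G_smooth \<delta> y" "G_smooth \<delta> y \<le> 1" by simp_all
qed

end

lemma G_profile_mono: "x \<le> y \<Longrightarrow> G_profile x \<le> G_profile y"
  by (simp add: G_profile_def)

lemma G_profile_scale: "0 \<le> l \<Longrightarrow> l \<le> 1 \<Longrightarrow> 0 \<le> y \<Longrightarrow> l * G_profile y \<le> G_profile (l * y)"
  using mult_left_mono[of 1 y l] mult_le_one[of l y] by (auto simp: G_profile_def)

lemma G_profile_le_1: "G_profile y \<le> 1"
  by (simp add: G_profile_def)

lemma G_profile_ge_1_iff: "1 \<le> G_profile y \<longleftrightarrow> 1 \<le> y"
  by (simp add: G_profile_def)

lemma has_derivative_profile:
  fixes f L :: "real \<Rightarrow> real"
  assumes f: "(f has_real_derivative f') (at ((snd z - c) * L (fst z)))"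
    and L: "(L has_real_derivative L') (at (fst z))"
  shows "((\<lambda>x. f ((snd x - c) * L (fst x)) + e * (fst x + snd x)) has_derivative
      (\<lambda>h. (f' * (snd z - c) * L' + e) * fst h + (f' * L (fst z) + e) * snd h)) (at z)"
proof -
  have "((\<lambda>x. L (fst x)) has_derivative (\<lambda>h. L' * fst h)) (at z)"
    using has_derivative_compose[OF has_derivative_fst[OF has_derivative_ident]
        L[THEN has_field_derivative_imp_has_derivative]] by (simp add: mult.commute)
  moreover have "((\<lambda>x. snd x - c) has_derivative snd) (at z)"
    using has_derivative_diff[OF has_derivative_snd[OF has_derivative_ident] has_derivative_const]
    by simp
  ultimately have "((\<lambda>x. (snd x - c) * L (fst x)) has_derivative
      (\<lambda>h. (snd z - c) * (L' * fst h) + snd h * L (fst z))) (at z)"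
    by (intro has_derivative_mult)
  from has_derivative_compose[OF this f[THEN has_field_derivative_imp_has_derivative]]
  have "((\<lambda>x. f ((snd x - c) * L (fst x))) has_derivative
      (\<lambda>h. f' * ((snd z - c) * (L' * fst h) + snd h * L (fst z)))) (at z)" .
  then show ?thesis
    by (rule has_derivative_eq_rhs[OF has_derivative_add])
      (auto intro!: derivative_eq_intros simp: fun_eq_iff algebra_simps)
qed

definition upper_barrier :: "real \<Rightarrow> real \<Rightarrow> real \<Rightarrow> real \<times> real \<Rightarrow> real" where
  "upper_barrier \<alpha> M \<tau> x = min (snd x * decay_rate \<alpha> (fst x + \<tau>)) M"

definition lower_barrier :: "real \<Rightarrow> real \<Rightarrow> real \<Rightarrow> real \<Rightarrow> real \<Rightarrow> real \<times> real \<Rightarrow> real" where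
  "lower_barrier \<alpha> M S0 \<delta> \<tau> x =
     max 0 (M * G_smooth \<delta> ((snd x - S0) * decay_rate \<alpha> (fst x + \<tau>) / M))"

context
  fixes \<alpha> \<tau> :: real assumes \<alpha>: "\<alpha> > 0" and \<tau>: "\<tau> > 0"
begin

lemma decay_rate_shift_pos: "t \<ge> 0 \<Longrightarrow> decay_rate \<alpha> (t + \<tau>) > 0"
  using \<alpha> \<tau> by (simp add: decay_rate_pos)

lemma upper_barrier_nonneg: "x \<in> {0..} \<times> {0..} \<Longrightarrow> M \<ge> 0 \<Longrightarrow> upper_barrier \<alpha> M \<tau> x \<ge> 0"
  using decay_rate_shift_pos[of "fst x"] by (auto simp: upper_barrier_def mem_Times_iff)

lemma has_derivative_upper_barrier_piece:
  assumes z: "fst z \<ge> 0"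
  defines "L \<equiv> decay_rate \<alpha> (fst z + \<tau>)"
  shows "((\<lambda>x. snd x * decay_rate \<alpha> (fst x + \<tau>) + \<epsilon> * (fst x + snd x)) has_derivative
    (\<lambda>h. (\<epsilon> - snd z * L / (\<alpha> * (fst z + \<tau>))) * fst h + (L + \<epsilon>) * snd h)) (at z)"
proof -
  have "((\<lambda>s. decay_rate \<alpha> (s + \<tau>)) has_real_derivative - L / (\<alpha> * (fst z + \<tau>))) (at (fst z))"
    using has_real_derivative_decay_rate_shift[OF \<alpha>] z \<tau> by (simp add: L_def)
  then show ?thesis
    using has_derivative_profile[where f = "\<lambda>y. y" and f' = 1 and z = z and c = 0
        and L = "\<lambda>s. decay_rate \<alpha> (s + \<tau>)" and L' = "- L / (\<alpha> * (fst z + \<tau>))" and e = \<epsilon>]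
    by (simp add: L_def algebra_simps)
qed

lemma continuous_on_upper_barrier: "continuous_on ({0..} \<times> {0..}) (upper_barrier \<alpha> M \<tau>)"
  unfolding upper_barrier_def[abs_def]
  by (intro continuous_intros continuous_on_decay_rate_quadrant \<alpha> \<tau>)

lemma has_derivative_lower_barrier_piece:
  fixes M S0 \<delta> :: real
  assumes M: "M > 0" and z: "fst z \<ge> 0"
  defines "L \<equiv> decay_rate \<alpha> (fst z + \<tau>)"
  defines "g' \<equiv> G_smooth_deriv \<delta> ((snd z - S0) * L / M)"
  shows "((\<lambda>x. M * G_smooth \<delta> ((snd x - S0) * decay_rate \<alpha> (fst x + \<tau>) / M)
      - \<epsilon> * (fst x + snd x)) has_derivative
    (\<lambda>h. (- g' * (snd z - S0) * L / (\<alpha> * (fst z + \<tau>)) - \<epsilon>) * fst h + (g' * L - \<epsilon>) * snd h)) (at z)"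
proof -
  have "((\<lambda>y. y / M) has_real_derivative 1 / M) (at ((snd z - S0) * L))"
    using M by (auto intro!: derivative_eq_intros)
  from DERIV_cmult[OF DERIV_chain2[OF has_real_derivative_G_smooth this], of M]
  have "((\<lambda>y. M * G_smooth \<delta> (y / M)) has_real_derivative g') (at ((snd z - S0) * L))"
    using M by (simp add: g'_def)
  moreover have "((\<lambda>s. decay_rate \<alpha> (s + \<tau>)) has_real_derivative - L / (\<alpha> * (fst z + \<tau>))) (at (fst z))"
    using has_real_derivative_decay_rate_shift[OF \<alpha>] z \<tau> by (simp add: L_def)
  ultimately show ?thesis
    using has_derivative_profile[where f = "\<lambda>y. M * G_smooth \<delta> (y / M)" and f' = g' and z = z
        and c = S0 and L = "\<lambda>s. decay_rate \<alpha> (s + \<tau>)" and L' = "- L / (\<alpha> * (fst z + \<tau>))"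
        and e = "- \<epsilon>"]
    by (simp add: L_def)
qed

context
  fixes M S0 \<delta> :: real assumes M: "M > 0" and \<delta>: "0 < \<delta>" "\<delta> < 1"
begin

lemma lower_barrier_le: "lower_barrier \<alpha> M S0 \<delta> \<tau> x \<le> M"
  using G_smooth_bounds(2)[OF \<delta>] M by (simp add: lower_barrier_def)

lemma lower_barrier_eq_0:
  assumes "snd x \<le> S0" "fst x \<ge> 0" shows "lower_barrier \<alpha> M S0 \<delta> \<tau> x = 0"
proof -
  have "(snd x - S0) * decay_rate \<alpha> (fst x + \<tau>) / M \<le> 0"
    using assms M decay_rate_shift_pos[of "fst x"] by (simp add: divide_nonpos_pos mult_nonpos_nonneg)
  then have "M * G_smooth \<delta> ((snd x - S0) * decay_rate \<alpha> (fst x + \<tau>) / M) \<le> 0"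
    using G_smooth_le[OF \<delta>] M by (meson order_trans mult_nonneg_nonpos less_imp_le)
  then show ?thesis by (simp add: lower_barrier_def)
qed

lemma continuous_on_lower_barrier: "continuous_on ({0..} \<times> {0..}) (lower_barrier \<alpha> M S0 \<delta> \<tau>)"
proof -
  have "continuous_on ({0..} \<times> {0..}) (\<lambda>x. (snd x - S0) * decay_rate \<alpha> (fst x + \<tau>) / M)"
    using M by (intro continuous_intros continuous_on_decay_rate_quadrant \<alpha> \<tau>) auto
  with continuous_on_G_smooth[OF \<delta>]
  have "continuous_on ({0..} \<times> {0..}) (\<lambda>x. G_smooth \<delta> ((snd x - S0) * decay_rate \<alpha> (fst x + \<tau>) / M))"
    by (rule continuous_on_compose2) auto
  then show ?thesis unfolding lower_barrier_def[abs_def] by (intro continuous_intros)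
qed

end

end

text \<open>The estimate behind the subsolution property of the lower barrier: the slope \<open>b\<close> of the
  test function is at most \<open>G_smooth' L\<close>, and \<open>G_smooth'\<^sup>\<alpha> \<le> G_smooth'\<close> because \<open>\<alpha> \<ge> 1\<close>.\<close>
lemma powr_mult_le_by_slope:
  fixes b g' L m g Y :: real
  assumes \<alpha>: "\<alpha> \<ge> 1" and g': "0 \<le> g'" "g' \<le> 1" and L: "0 \<le> L"
    and b: "0 \<le> b" "b \<le> g' * L" and g: "0 \<le> g" "g \<le> Y" and m: "m \<le> g"
  shows "b powr \<alpha> * m \<le> g' * L powr \<alpha> * Y"
proof (cases "m \<le> 0")
  case True
  then have "b powr \<alpha> * m \<le> 0" by (simp add: mult_nonneg_nonpos)
  moreover have "0 \<le> g' * L powr \<alpha> * Y" using g' g by simp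
  ultimately show ?thesis by linarith
next
  case False
  have "b powr \<alpha> \<le> (g' * L) powr \<alpha>" using b \<alpha> by (intro powr_mono2) auto
  then have "b powr \<alpha> * m \<le> (g' * L) powr \<alpha> * g"
    by (rule mult_mono[OF _ m]) (use False in auto)
  also have "\<dots> = g' powr \<alpha> * L powr \<alpha> * g" using g' L by (simp add: powr_mult)
  also have "\<dots> \<le> g' * L powr \<alpha> * Y"
  proof (rule mult_mono[OF mult_right_mono])
    show "g' powr \<alpha> \<le> g'" using powr_mono'[of 1 \<alpha> g'] g' \<alpha> by simp
  qed (use g' g in auto)
  finally show ?thesis .
qed

section \<open>Comparison with the barriers\<close>

locale mass_solution =
  fixes \<alpha> :: real and m0 :: "real \<Rightarrow> real" and m :: "real \<Rightarrow> real \<Rightarrow> real"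
  assumes alpha_gt_1: "\<alpha> > 1" and solution: "mass_problem_solution \<alpha> m0 m"
begin

lemma alpha_pos: "\<alpha> > 0"
  using alpha_gt_1 by simp

lemma continuous_on_m: "continuous_on ({0..} \<times> {0..}) (\<lambda>x. m (fst x) (snd x))"
  using solution unfolding mass_problem_solution_def mass_visc_sol_def case_prod_beta by blast

lemma m_boundary: "t \<ge> 0 \<Longrightarrow> m t 0 = 0"
  and m_initial: "\<rho> \<ge> 0 \<Longrightarrow> m 0 \<rho> = m0 \<rho>"
  using solution unfolding mass_problem_solution_def by simp_all

lemma m_bounded:
  obtains K where "\<And>x. x \<in> {0..} \<times> {0..} \<Longrightarrow> \<bar>m (fst x) (snd x)\<bar> \<le> K"
proof -
  have "bounded ((\<lambda>x. m (fst x) (snd x)) ` ({0..} \<times> {0..}))"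
    using solution unfolding mass_problem_solution_def case_prod_beta by blast
  then show ?thesis using that unfolding bounded_iff by force
qed

lemma touching_from_above:
  assumes "z \<in> quadrant" "(P has_derivative (\<lambda>h. a * fst h + b * snd h)) (at z)"
    and "\<And>x. x \<in> quadrant \<Longrightarrow> m (fst x) (snd x) - P x \<le> m (fst z) (snd z) - P z"
  shows "a + (max b 0) powr \<alpha> * m (fst z) (snd z) \<le> 0"
proof -
  have "(a, b) \<in> frechet_superdiff (\<lambda>(t, \<rho>). m t \<rho>) z"
    using frechet_superdiff_at_max[of z P a b "\<lambda>(t, \<rho>). m t \<rho>"] assms by (simp add: case_prod_beta)
  with assms(1) solution show ?thesis
    unfolding mass_problem_solution_def mass_visc_sol_def by fastforce
qed

lemma touching_from_below:
  assumes "z \<in> quadrant" "(P has_derivative (\<lambda>h. a * fst h + b * snd h)) (at z)"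
    and "\<And>x. x \<in> quadrant \<Longrightarrow> m (fst z) (snd z) - P z \<le> m (fst x) (snd x) - P x"
  shows "a + (max b 0) powr \<alpha> * m (fst z) (snd z) \<ge> 0"
proof -
  have "(a, b) \<in> frechet_subdiff (\<lambda>(t, \<rho>). m t \<rho>) z"
    using frechet_subdiff_at_min[of z P a b "\<lambda>(t, \<rho>). m t \<rho>"] assms by (simp add: case_prod_beta)
  with assms(1) solution show ?thesis
    unfolding mass_problem_solution_def mass_visc_sol_def by fastforce
qed

text \<open>At a maximum of \<open>m\<close> minus the penalised barrier, the active piece of the barrier is a
  test function from above, and the viscosity inequality of \<open>m\<close> there contradicts the barrier being a
  strict supersolution.\<close>
lemma upper_barrier_not_exceeded_at_max:
  assumes \<tau>: "\<tau> > 0" and M: "M \<ge> 0" and \<epsilon>: "\<epsilon> > 0" and z: "z \<in> quadrant"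
    and max: "\<And>x. x \<in> quadrant \<Longrightarrow> m (fst x) (snd x) - upper_barrier \<alpha> M \<tau> x - \<epsilon> * (fst x + snd x)
      \<le> m (fst z) (snd z) - upper_barrier \<alpha> M \<tau> z - \<epsilon> * (fst z + snd z)"
  shows "m (fst z) (snd z) \<le> upper_barrier \<alpha> M \<tau> z + \<epsilon> * (fst z + snd z)"
proof (rule ccontr)
  assume above: "\<not> ?thesis"
  obtain t \<rho> where z_eq: "z = (t, \<rho>)" by fastforce
  have t: "t > 0" "\<rho> > 0" using z by (simp_all add: z_eq quadrant_def)
  define L where "L = decay_rate \<alpha> (t + \<tau>)"
  have L: "L > 0" "L powr \<alpha> = 1 / (\<alpha> * (t + \<tau>))"
    using t \<tau> alpha_pos by (simp_all add: L_def decay_rate_pos decay_rate_powr)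
  have pen: "\<epsilon> * (t + \<rho>) \<ge> 0" using \<epsilon> t by simp
  show False
  proof (cases "\<rho> * L \<le> M")
    case True
    define P where "P x = snd x * decay_rate \<alpha> (fst x + \<tau>) + \<epsilon> * (fst x + snd x)" for x
    have "(P has_derivative (\<lambda>h. (\<epsilon> - \<rho> * L / (\<alpha> * (t + \<tau>))) * fst h + (L + \<epsilon>) * snd h)) (at z)"
      using has_derivative_upper_barrier_piece[OF alpha_pos \<tau>, of z \<epsilon>] t
      unfolding P_def[abs_def] by (simp add: z_eq L_def)
    moreover have "m (fst x) (snd x) - P x \<le> m (fst z) (snd z) - P z" if "x \<in> quadrant" for x
      using max[OF that] True by (simp add: P_def upper_barrier_def z_eq L_def)
    ultimately have touch: "\<epsilon> - \<rho> * L / (\<alpha> * (t + \<tau>)) + (max (L + \<epsilon>) 0) powr \<alpha> * m t \<rho> \<le> 0"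
      using touching_from_above[OF z] by (fastforce simp: z_eq)
    have "L powr \<alpha> * (\<rho> * L) \<le> (max (L + \<epsilon>) 0) powr \<alpha> * m t \<rho>"
    proof (rule mult_mono)
      show "L powr \<alpha> \<le> (max (L + \<epsilon>) 0) powr \<alpha>" using L \<epsilon> alpha_pos by (intro powr_mono2) auto
      show "\<rho> * L \<le> m t \<rho>" using above True pen by (simp add: upper_barrier_def z_eq L_def)
    qed (use L t in auto)
    then show False using touch L(2) \<epsilon> by simp
  next
    case False
    define P where "P x = M + \<epsilon> * (fst x + snd x)" for x
    have "(P has_derivative (\<lambda>h. \<epsilon> * fst h + \<epsilon> * snd h)) (at z)"
      unfolding P_def by (auto intro!: derivative_eq_intros simp: algebra_simps)
    moreover have "m (fst x) (snd x) - P x \<le> m (fst z) (snd z) - P z" if "x \<in> quadrant" for x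
      using max[OF that] False by (simp add: P_def upper_barrier_def z_eq L_def)
    ultimately have "\<epsilon> + (max \<epsilon> 0) powr \<alpha> * m t \<rho> \<le> 0"
      using touching_from_above[OF z] by (fastforce simp: z_eq)
    moreover have "m t \<rho> \<ge> 0" using above False M pen by (simp add: upper_barrier_def z_eq L_def)
    ultimately show False using \<epsilon> by (smt (verit) powr_ge_zero zero_le_mult_iff)
  qed
qed

lemma upper_comparison:
  assumes \<tau>: "\<tau> > 0" and M: "M \<ge> 0"
    and initial: "\<And>\<rho>. \<rho> \<ge> 0 \<Longrightarrow> m0 \<rho> \<le> min (\<rho> * decay_rate \<alpha> \<tau>) M"
    and "t \<ge> 0" "\<rho> \<ge> 0"
  shows "m t \<rho> \<le> upper_barrier \<alpha> M \<tau> (t, \<rho>)"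
proof (rule ccontr)
  define D where "D x = m (fst x) (snd x) - upper_barrier \<alpha> M \<tau> x" for x
  assume "\<not> ?thesis"
  then have x0: "(t, \<rho>) \<in> {0..} \<times> {0..}" "D (t, \<rho>) > 0" using assms by (auto simp: D_def)
  obtain K where K: "\<And>x. x \<in> {0..} \<times> {0..} \<Longrightarrow> \<bar>m (fst x) (snd x)\<bar> \<le> K"
    using m_bounded by blast
  have "continuous_on ({0..} \<times> {0..}) D"
    unfolding D_def[abs_def]
    by (intro continuous_intros continuous_on_m continuous_on_upper_barrier alpha_pos \<tau>)
  moreover have "D x \<le> K" if "x \<in> {0..} \<times> {0..}" for x
    using K[OF that] upper_barrier_nonneg[OF alpha_pos \<tau> that M] by (simp add: D_def)
  moreover have "D (0, r) \<le> 0" if "r \<ge> 0" for r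
    using initial[OF that] m_initial[OF that] by (simp add: D_def upper_barrier_def)
  moreover have "D (s, 0) \<le> 0" if "s \<ge> 0" for s
    using m_boundary[OF that] M by (simp add: D_def upper_barrier_def)
  ultimately obtain \<epsilon> z where \<epsilon>: "\<epsilon> > 0" and z: "z \<in> quadrant"
    and above: "\<epsilon> * (fst z + snd z) < D z"
    and max: "\<And>x. x \<in> quadrant \<Longrightarrow> D x - \<epsilon> * (fst x + snd x) \<le> D z - \<epsilon> * (fst z + snd z)"
    using penalized_max_in_quadrant[of D K "(t, \<rho>)"] x0 by blast
  have "m (fst z) (snd z) \<le> upper_barrier \<alpha> M \<tau> z + \<epsilon> * (fst z + snd z)"
    by (rule upper_barrier_not_exceeded_at_max[OF \<tau> M \<epsilon> z]) (use max in \<open>simp add: D_def\<close>)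
  then show False using above by (simp add: D_def)
qed

text \<open>At a minimum of \<open>m\<close> minus the penalised barrier, the active piece of the barrier is a
  test function from below, and the viscosity inequality of \<open>m\<close> there contradicts the barrier being a
  strict subsolution.\<close>
lemma lower_barrier_not_exceeded_at_min:
  assumes \<tau>: "\<tau> > 0" and M: "M > 0" and \<delta>: "0 < \<delta>" "\<delta> < 1" and \<epsilon>: "\<epsilon> > 0"
    and z: "z \<in> quadrant"
    and min: "\<And>x. x \<in> quadrant \<Longrightarrow>
      lower_barrier \<alpha> M S0 \<delta> \<tau> x - m (fst x) (snd x) - \<epsilon> * (fst x + snd x)
      \<le> lower_barrier \<alpha> M S0 \<delta> \<tau> z - m (fst z) (snd z) - \<epsilon> * (fst z + snd z)"
  shows "lower_barrier \<alpha> M S0 \<delta> \<tau> z - \<epsilon> * (fst z + snd z) \<le> m (fst z) (snd z)"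
proof (rule ccontr)
  assume below: "\<not> ?thesis"
  obtain t \<rho> where z_eq: "z = (t, \<rho>)" by fastforce
  have t: "t > 0" "\<rho> > 0" using z by (simp_all add: z_eq quadrant_def)
  define L where "L = decay_rate \<alpha> (t + \<tau>)"
  have L: "L \<ge> 0" "L powr \<alpha> = 1 / (\<alpha> * (t + \<tau>))"
    using t \<tau> alpha_pos by (simp_all add: L_def decay_rate_pos less_imp_le decay_rate_powr)
  define Y where "Y = (\<rho> - S0) * L / M"
  have pen: "\<epsilon> * (t + \<rho>) \<ge> 0" using \<epsilon> t by simp
  show False
  proof (cases "M * G_smooth \<delta> Y \<ge> 0")
    case True
    define g' where "g' = G_smooth_deriv \<delta> Y"
    have g': "0 \<le> g'" "g' \<le> 1" using G_smooth_deriv_bounds[OF \<delta>] by (simp_all add: g'_def)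
    define P where "P x = M * G_smooth \<delta> ((snd x - S0) * decay_rate \<alpha> (fst x + \<tau>) / M)
      - \<epsilon> * (fst x + snd x)" for x
    have "(P has_derivative (\<lambda>h. (- g' * (\<rho> - S0) * L / (\<alpha> * (t + \<tau>)) - \<epsilon>) * fst h
        + (g' * L - \<epsilon>) * snd h)) (at z)"
      using has_derivative_lower_barrier_piece[OF alpha_pos \<tau> M, where z = z and ?S0.0 = S0 and \<epsilon> = \<epsilon>] t
      unfolding P_def[abs_def] by (simp add: z_eq L_def g'_def Y_def)
    moreover have "m (fst z) (snd z) - P z \<le> m (fst x) (snd x) - P x" if "x \<in> quadrant" for x
      using min[OF that] True by (simp add: P_def lower_barrier_def z_eq L_def Y_def)
    ultimately have "- g' * (\<rho> - S0) * L / (\<alpha> * (t + \<tau>)) - \<epsilon>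
        + (max (g' * L - \<epsilon>) 0) powr \<alpha> * m t \<rho> \<ge> 0"
      using touching_from_below[OF z] by (fastforce simp: z_eq)
    moreover have "(max (g' * L - \<epsilon>) 0) powr \<alpha> * m t \<rho> \<le> g' * L powr \<alpha> * (M * Y)"
    proof (rule powr_mult_le_by_slope)
      show "m t \<rho> \<le> M * G_smooth \<delta> Y"
        using below True pen by (simp add: lower_barrier_def z_eq L_def Y_def)
      show "M * G_smooth \<delta> Y \<le> M * Y" using G_smooth_le[OF \<delta>] M by simp
    qed (use alpha_gt_1 g' L \<epsilon> True in auto)
    moreover have "g' * L powr \<alpha> * (M * Y) = g' * (\<rho> - S0) * L / (\<alpha> * (t + \<tau>))"
      using L(2) M by (simp add: Y_def)
    ultimately show False using \<epsilon> by linarith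
  next
    case False
    define P where "P x = - \<epsilon> * (fst x + snd x)" for x
    have "(P has_derivative (\<lambda>h. (- \<epsilon>) * fst h + (- \<epsilon>) * snd h)) (at z)"
      unfolding P_def by (auto intro!: derivative_eq_intros simp: algebra_simps)
    moreover have "m (fst z) (snd z) - P z \<le> m (fst x) (snd x) - P x" if "x \<in> quadrant" for x
      using min[OF that] False by (simp add: P_def lower_barrier_def z_eq L_def Y_def)
    ultimately have "- \<epsilon> + (max (- \<epsilon>) 0) powr \<alpha> * m t \<rho> \<ge> 0"
      using touching_from_below[OF z] by (fastforce simp: z_eq)
    then show False using \<epsilon> by simp
  qed
qed

lemma lower_comparison:
  assumes \<tau>: "\<tau> > 0" and M: "M > 0" and \<delta>: "0 < \<delta>" "\<delta> < 1" and S0: "S0 \<ge> 0"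
    and initial_nonneg: "\<And>\<rho>. \<rho> \<ge> 0 \<Longrightarrow> 0 \<le> m0 \<rho>"
    and initial_full: "\<And>\<rho>. \<rho> > S0 \<Longrightarrow> M \<le> m0 \<rho>"
    and "t \<ge> 0" "\<rho> \<ge> 0"
  shows "lower_barrier \<alpha> M S0 \<delta> \<tau> (t, \<rho>) \<le> m t \<rho>"
proof (rule ccontr)
  define D where "D x = lower_barrier \<alpha> M S0 \<delta> \<tau> x - m (fst x) (snd x)" for x
  assume "\<not> ?thesis"
  then have x0: "(t, \<rho>) \<in> {0..} \<times> {0..}" "D (t, \<rho>) > 0" using assms by (auto simp: D_def)
  obtain K where K: "\<And>x. x \<in> {0..} \<times> {0..} \<Longrightarrow> \<bar>m (fst x) (snd x)\<bar> \<le> K"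
    using m_bounded by blast
  note barrier = lower_barrier_le[OF alpha_pos \<tau> M \<delta>] lower_barrier_eq_0[OF alpha_pos \<tau> M \<delta>]
  have "continuous_on ({0..} \<times> {0..}) D"
    unfolding D_def[abs_def]
    by (intro continuous_intros continuous_on_m continuous_on_lower_barrier alpha_pos \<tau> M \<delta>)
  moreover have "D x \<le> M + K" if "x \<in> {0..} \<times> {0..}" for x
    using K[OF that] barrier(1)[of S0 x] by (simp add: D_def)
  moreover have "D (0, r) \<le> 0" if "r \<ge> 0" for r
  proof (cases "r \<le> S0")
    case True
    then show ?thesis using barrier(2)[of "(0, r)"] initial_nonneg[OF that] m_initial[OF that]
      by (simp add: D_def)
  next
    case False
    then show ?thesis using barrier(1)[of S0 "(0, r)"] initial_full[of r] m_initial[OF that]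
      by (simp add: D_def)
  qed
  moreover have "D (s, 0) \<le> 0" if "s \<ge> 0" for s
    using barrier(2)[of "(s, 0)"] m_boundary[OF that] that S0 by (simp add: D_def)
  ultimately obtain \<epsilon> z where \<epsilon>: "\<epsilon> > 0" and z: "z \<in> quadrant"
    and above: "\<epsilon> * (fst z + snd z) < D z"
    and max: "\<And>x. x \<in> quadrant \<Longrightarrow> D x - \<epsilon> * (fst x + snd x) \<le> D z - \<epsilon> * (fst z + snd z)"
    using penalized_max_in_quadrant[of D "M + K" "(t, \<rho>)"] x0 by blast
  have "lower_barrier \<alpha> M S0 \<delta> \<tau> z - \<epsilon> * (fst z + snd z) \<le> m (fst z) (snd z)"
    by (rule lower_barrier_not_exceeded_at_min[OF \<tau> M \<delta> \<epsilon> z]) (use max in \<open>simp add: D_def\<close>)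
  then show False using above by (simp add: D_def)
qed

end

section \<open>Long-time behaviour\<close>

locale finite_mass_solution = mass_solution +
  fixes M S0 C :: real
  assumes mass_pos: "M > 0" and S0_nonneg: "S0 \<ge> 0" and C_pos: "C > 0"
    and m0_nonneg: "\<And>\<rho>. \<rho> \<ge> 0 \<Longrightarrow> 0 \<le> m0 \<rho>"
    and m0_le_mass: "\<And>\<rho>. \<rho> \<ge> 0 \<Longrightarrow> m0 \<rho> \<le> M"
    and m0_le_linear: "\<And>\<rho>. \<rho> \<ge> 0 \<Longrightarrow> m0 \<rho> \<le> C * \<rho>"
    and m0_full: "\<And>\<rho>. \<rho> > S0 \<Longrightarrow> m0 \<rho> = M"
begin

lemma m_upper_bound:
  assumes t: "t > 0" and \<rho>: "\<rho> \<ge> 0"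
  shows "m t \<rho> \<le> M * G_profile (\<rho> * decay_rate \<alpha> t / M)"
proof -
  define \<tau> where "\<tau> = C powr (- \<alpha>) / \<alpha>"
  have \<tau>: "\<tau> > 0" "decay_rate \<alpha> \<tau> = C"
    using C_pos alpha_pos by (simp_all add: \<tau>_def decay_rate_powr_neg_div)
  have "m t \<rho> \<le> min (\<rho> * decay_rate \<alpha> (t + \<tau>)) M"
    using upper_comparison[of \<tau> M t \<rho>] \<tau> mass_pos m0_le_mass m0_le_linear t \<rho>
    by (simp add: upper_barrier_def mult.commute)
  also have "\<dots> \<le> min (\<rho> * decay_rate \<alpha> t) M"
    using decay_rate_antimono[OF alpha_pos t, of "t + \<tau>"] \<tau> \<rho> by (intro min.mono mult_left_mono) auto
  also have "\<dots> = M * G_profile (\<rho> * decay_rate \<alpha> t / M)"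
    using mass_pos by (simp add: G_profile_def field_simps)
  finally show ?thesis .
qed

text \<open>The smoothing \<open>\<delta>\<close> and the time shift \<open>\<tau>\<close> of the lower barrier are sent to \<open>0\<close> together.\<close>
lemma m_lower_bound:
  assumes t: "t > 0" and \<rho>: "\<rho> \<ge> 0"
  shows "M * G_profile ((\<rho> - S0) * decay_rate \<alpha> t / M) \<le> m t \<rho>"
proof -
  define f where "f \<tau> = M * min ((\<rho> - S0) * decay_rate \<alpha> (t + \<tau>) / M) (1 - \<tau>)" for \<tau>
  have "f \<tau> \<le> m t \<rho>" if "0 < \<tau>" "\<tau> < 1" for \<tau>
  proof -
    have "f \<tau> \<le> M * G_smooth \<tau> ((\<rho> - S0) * decay_rate \<alpha> (t + \<tau>) / M)"
      unfolding f_def using G_smooth_bounds(1)[OF that] mass_pos by simp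
    also have "\<dots> \<le> m t \<rho>"
      using lower_comparison[of \<tau> M \<tau> S0 t \<rho>] that t \<rho> mass_pos S0_nonneg m0_nonneg m0_full
      by (simp add: lower_barrier_def)
    finally show ?thesis .
  qed
  then have "\<forall>\<^sub>F \<tau> in at_right 0. f \<tau> \<le> m t \<rho>"
    by (intro eventually_at_rightI[of 0 1]) auto
  moreover have "(f \<longlongrightarrow> M * min ((\<rho> - S0) * decay_rate \<alpha> t / M) (1 - 0)) (at_right 0)"
    unfolding f_def using tendsto_decay_rate_at_right[OF alpha_pos t] mass_pos
    by (intro tendsto_intros) auto
  ultimately have "M * min ((\<rho> - S0) * decay_rate \<alpha> t / M) 1 \<le> m t \<rho>"
    by (simp add: tendsto_upperbound)
  then show ?thesis by (simp add: G_profile_def min_def)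
qed

lemma m_le_mass:
  assumes "t > 0" "\<rho> \<ge> 0" shows "m t \<rho> \<le> M"
proof -
  have "M * G_profile (\<rho> * decay_rate \<alpha> t / M) \<le> M"
    by (rule mult_left_le[OF G_profile_le_1]) (use mass_pos in simp)
  with m_upper_bound[OF assms] show ?thesis by linarith
qed

lemma mass_reached:
  assumes t: "t > 0" and \<rho>: "S0 + M / decay_rate \<alpha> t < \<rho>"
  shows "m t \<rho> = M"
proof -
  have L: "decay_rate \<alpha> t > 0" using decay_rate_pos[OF alpha_pos t] .
  have "0 \<le> M / decay_rate \<alpha> t" using L mass_pos by simp
  then have \<rho>_nonneg: "\<rho> \<ge> 0" using \<rho> S0_nonneg by linarith
  have "M / decay_rate \<alpha> t < \<rho> - S0" using \<rho> by simp
  then have "M < (\<rho> - S0) * decay_rate \<alpha> t" using L by (simp add: pos_divide_less_eq)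
  then have "1 \<le> (\<rho> - S0) * decay_rate \<alpha> t / M" using mass_pos by simp
  then have "M \<le> M * G_profile ((\<rho> - S0) * decay_rate \<alpha> t / M)"
    using G_profile_ge_1_iff mass_pos by simp
  then have "M \<le> m t \<rho>" using m_lower_bound[OF t \<rho>_nonneg] by linarith
  with m_le_mass[OF t \<rho>_nonneg] show ?thesis by simp
qed

lemma front_bounds:
  assumes t: "t > 0"
  defines "S \<equiv> Inf {\<rho>. \<rho> \<ge> 0 \<and> m t \<rho> = M}"
  shows "M / decay_rate \<alpha> t \<le> S" "S \<le> S0 + M / decay_rate \<alpha> t"
proof -
  let ?A = "{\<rho>. \<rho> \<ge> 0 \<and> m t \<rho> = M}"
  have L: "decay_rate \<alpha> t > 0" using decay_rate_pos[OF alpha_pos t] .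
  have full: "\<rho> \<in> ?A" if "S0 + M / decay_rate \<alpha> t < \<rho>" for \<rho>
  proof -
    have "0 \<le> S0 + M / decay_rate \<alpha> t" using S0_nonneg L mass_pos by simp
    then show ?thesis using mass_reached[OF t that] that by simp
  qed
  have A_bdd: "bdd_below ?A" by (rule bdd_belowI[of _ 0]) auto
  have below: "M / decay_rate \<alpha> t \<le> \<rho>" if "\<rho> \<in> ?A" for \<rho>
  proof -
    have "M \<le> M * G_profile (\<rho> * decay_rate \<alpha> t / M)"
      using m_upper_bound[OF t, of \<rho>] that by simp
    then have "1 \<le> G_profile (\<rho> * decay_rate \<alpha> t / M)" using mass_pos by simp
    then show ?thesis using L mass_pos by (simp add: G_profile_ge_1_iff field_simps)
  qed
  have "?A \<noteq> {}" using full[of "S0 + M / decay_rate \<alpha> t + 1"] by auto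
  then show "M / decay_rate \<alpha> t \<le> S" unfolding S_def by (rule cInf_greatest) (rule below)
  show "S \<le> S0 + M / decay_rate \<alpha> t"
  proof (rule dense_ge)
    fix \<rho> assume "S0 + M / decay_rate \<alpha> t < \<rho>"
    then show "S \<le> \<rho>" unfolding S_def by (rule cInf_lower[OF full A_bdd])
  qed
qed

lemma front_ratio_bounds:
  assumes t: "t > 0"
  defines "S \<equiv> Inf {\<rho>. \<rho> \<ge> 0 \<and> m t \<rho> = M}"
  shows "0 \<le> S / (M * (\<alpha> * t) powr (1 / \<alpha>)) - 1 \<and>
    S / (M * (\<alpha> * t) powr (1 / \<alpha>)) - 1 \<le> S0 / M * (\<alpha> * t) powr (- 1 / \<alpha>)"
proof -
  have L: "decay_rate \<alpha> t > 0" using decay_rate_pos[OF alpha_pos t] .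
  have "S / (M * (\<alpha> * t) powr (1 / \<alpha>)) - 1 = (S - M / decay_rate \<alpha> t) * decay_rate \<alpha> t / M"
    using L mass_pos by (simp add: powr_inverse_eq_decay_rate[OF alpha_pos] field_simps)
  moreover have "0 \<le> (S - M / decay_rate \<alpha> t) * decay_rate \<alpha> t / M"
    using front_bounds(1)[OF t] L mass_pos unfolding S_def by simp
  moreover have "(S - M / decay_rate \<alpha> t) * decay_rate \<alpha> t / M \<le> S0 / M * decay_rate \<alpha> t"
    using front_bounds(2)[OF t] L mass_pos unfolding S_def
    by (simp add: divide_right_mono mult_right_mono)
  ultimately show ?thesis by (simp add: decay_rate_def)
qed

lemma profile_deviation:
  assumes t: "t > 0" and \<epsilon>: "0 < \<epsilon>" "\<epsilon> \<le> y"
    and small: "S0 * decay_rate \<alpha> t / (M * \<epsilon>) \<le> 1"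
  shows "\<bar>m t (M * (\<alpha> * t) powr (1 / \<alpha>) * y) / (M * G_profile y) - 1\<bar>
    \<le> S0 * decay_rate \<alpha> t / (M * \<epsilon>)"
proof -
  define \<sigma> where "\<sigma> = S0 * decay_rate \<alpha> t / (M * \<epsilon>)"
  define \<rho> where "\<rho> = M * y / decay_rate \<alpha> t"
  define c where "c = M * G_profile y"
  have L: "decay_rate \<alpha> t > 0" using decay_rate_pos[OF alpha_pos t] .
  have \<sigma>: "0 \<le> \<sigma>" "\<sigma> \<le> 1" using small L mass_pos S0_nonneg \<epsilon> by (simp_all add: \<sigma>_def)
  have y: "y > 0" using \<epsilon> by simp
  have c: "c > 0" using y mass_pos by (simp add: c_def G_profile_def)
  have \<rho>: "\<rho> \<ge> 0" using y L mass_pos by (simp add: \<rho>_def)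
  have "m t \<rho> \<le> c"
    using m_upper_bound[OF t \<rho>] L mass_pos by (simp add: \<rho>_def c_def)
  moreover have "(1 - \<sigma>) * c \<le> m t \<rho>"
  proof -
    have "(\<rho> - S0) * decay_rate \<alpha> t / M = y - \<sigma> * \<epsilon>"
      using L mass_pos \<epsilon> by (simp add: \<rho>_def \<sigma>_def field_simps)
    moreover have "\<sigma> * \<epsilon> \<le> \<sigma> * y" using \<sigma> \<epsilon> by (simp add: mult_left_mono)
    ultimately have "(1 - \<sigma>) * y \<le> (\<rho> - S0) * decay_rate \<alpha> t / M"
      by (simp add: algebra_simps)
    have "(1 - \<sigma>) * G_profile y \<le> G_profile ((1 - \<sigma>) * y)"
      using \<sigma> y by (intro G_profile_scale) auto
    also have "\<dots> \<le> G_profile ((\<rho> - S0) * decay_rate \<alpha> t / M)"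
      by (rule G_profile_mono) fact
    finally have "(1 - \<sigma>) * c \<le> M * G_profile ((\<rho> - S0) * decay_rate \<alpha> t / M)"
      using mass_pos unfolding c_def by (simp add: mult.left_commute)
    also have "\<dots> \<le> m t \<rho>" by (rule m_lower_bound[OF t \<rho>])
    finally show ?thesis .
  qed
  ultimately have "m t \<rho> / c \<le> 1" "1 - \<sigma> \<le> m t \<rho> / c"
    using c by (simp_all add: field_simps)
  moreover have "M * (\<alpha> * t) powr (1 / \<alpha>) * y = \<rho>"
    by (simp add: \<rho>_def powr_inverse_eq_decay_rate[OF alpha_pos])
  ultimately show ?thesis unfolding \<sigma>_def[symmetric] c_def[symmetric] by (simp add: abs_le_iff)
qed

lemma profile_convergence:
  assumes \<epsilon>: "\<epsilon> > 0" and \<eta>: "\<eta> > 0"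
  shows "\<forall>\<^sub>F t in at_top. \<forall>y\<ge>\<epsilon>.
    \<bar>m t (M * (\<alpha> * t) powr (1 / \<alpha>) * y) / (M * G_profile y) - 1\<bar> \<le> \<eta>"
proof -
  have "((\<lambda>t. S0 * decay_rate \<alpha> t / (M * \<epsilon>)) \<longlongrightarrow> S0 * 0 / (M * \<epsilon>)) at_top"
    using mass_pos \<epsilon> by (intro tendsto_intros decay_rate_tendsto_0 alpha_pos) simp
  then have "\<forall>\<^sub>F t in at_top. S0 * decay_rate \<alpha> t / (M * \<epsilon>) < min \<eta> 1"
    using \<eta> by (intro order_tendstoD) auto
  with eventually_gt_at_top[of 0] show ?thesis
  proof eventually_elim
    case (elim t)
    show ?case
    proof (intro allI impI)
      fix y assume "\<epsilon> \<le> y"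
      then have "\<bar>m t (M * (\<alpha> * t) powr (1 / \<alpha>) * y) / (M * G_profile y) - 1\<bar>
          \<le> S0 * decay_rate \<alpha> t / (M * \<epsilon>)"
        using elim \<epsilon> by (intro profile_deviation) auto
      then show "\<bar>m t (M * (\<alpha> * t) powr (1 / \<alpha>) * y) / (M * G_profile y) - 1\<bar> \<le> \<eta>"
        using elim by linarith
    qed
  qed
qed

end

section \<open>The initial mass\<close>

lemma Inf_level_set_of_mono:
  fixes f :: "real \<Rightarrow> real"
  assumes mono: "\<And>x y. 0 \<le> x \<Longrightarrow> x \<le> y \<Longrightarrow> f x \<le> f y" and le: "\<And>x. 0 \<le> x \<Longrightarrow> f x \<le> M"
    and R: "0 \<le> R" "f R = M"
  defines "S \<equiv> Inf {x. 0 \<le> x \<and> f x = M}"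
  shows "0 \<le> S" and "\<And>x. S < x \<Longrightarrow> f x = M"
proof -
  have ne: "{x. 0 \<le> x \<and> f x = M} \<noteq> {}" using R by blast
  then show "0 \<le> S" unfolding S_def by (rule cInf_greatest) auto
  fix x assume "S < x"
  then obtain x' where "0 \<le> x'" "f x' = M" "x' < x"
    using cInf_lessD[OF ne] unfolding S_def by auto
  then show "f x = M" using mono[of x' x] le[of x] by simp
qed

context
  fixes u0 :: "real \<Rightarrow> real" and C R :: real
  assumes meas: "u0 \<in> borel_measurable lborel"
    and bounded: "AE x in lborel. 0 < x \<longrightarrow> \<bar>u0 x\<bar> \<le> C"
    and nonneg: "AE x in lborel. 0 < x \<longrightarrow> u0 x \<ge> 0"
    and support: "AE x in lborel. R < x \<longrightarrow> u0 x = 0" and R: "R \<ge> 0"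
begin

lemma set_integrable_u0: "A \<in> sets lborel \<Longrightarrow> A \<subseteq> {0<..} \<Longrightarrow> set_integrable lborel A u0"
proof (rule set_integrable_subset)
  show "set_integrable lborel {0<..} u0"
    unfolding set_integrable_def
  proof (rule Bochner_Integration.integrable_bound)
    show "integrable lborel (\<lambda>x. C * indicator {0<..R} x :: real)"
      using R by (intro integrable_mult_right integrable_real_indicator) auto
    show "(\<lambda>x. indicator {0<..} x *\<^sub>R u0 x) \<in> borel_measurable lborel"
      using meas by measurable
    show "AE x in lborel. norm (indicator {0<..} x *\<^sub>R u0 x) \<le> norm (C * indicator {0<..R} x :: real)"
      using bounded support by eventually_elim (auto simp: indicator_def)
  qed
qed

lemma set_integral_u0_nonneg: "A \<subseteq> {0<..} \<Longrightarrow> 0 \<le> (LINT x:A|lborel. u0 x)"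
  unfolding set_lebesgue_integral_def
  by (rule integral_nonneg_AE) (use nonneg in \<open>eventually_elim, auto simp: indicator_def\<close>)

lemma set_integral_u0_mono:
  assumes "A \<in> sets lborel" "B \<in> sets lborel" "A \<subseteq> B" "B \<subseteq> {0<..}"
  shows "(LINT x:A|lborel. u0 x) \<le> (LINT x:B|lborel. u0 x)"
proof -
  have "set_integrable lborel A u0" "set_integrable lborel (B - A) u0"
    using assms by (auto intro!: set_integrable_u0)
  from set_integral_Un[OF _ this] assms(3)
  have "(LINT x:B|lborel. u0 x) = (LINT x:A|lborel. u0 x) + (LINT x:B - A|lborel. u0 x)"
    by (simp add: Un_absorb1)
  moreover have "0 \<le> (LINT x:B - A|lborel. u0 x)" using assms by (intro set_integral_u0_nonneg) auto
  ultimately show ?thesis by simp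
qed

lemma set_integral_u0_le_linear:
  assumes "\<rho> \<ge> 0" shows "(LINT x:{0<..\<rho>}|lborel. u0 x) \<le> C * \<rho>"
proof -
  have "(LINT x:{0<..\<rho>}|lborel. u0 x) \<le> (LINT x:{0<..\<rho>}|lborel. C)"
  proof (rule set_integral_mono_AE)
    show "set_integrable lborel {0<..\<rho>} u0" by (rule set_integrable_u0) auto
    show "set_integrable lborel {0<..\<rho>} (\<lambda>x. C)"
      using assms by (simp add: set_integrable_def integrable_real_indicator)
    show "AE x\<in>{0<..\<rho>} in lborel. u0 x \<le> C"
      using bounded by eventually_elim auto
  qed
  also have "\<dots> = C * \<rho>" using assms by (simp add: set_integral_const)
  finally show ?thesis .
qed

lemma set_integral_u0_eq_total:
  assumes "\<rho> \<ge> R" shows "(LINT x:{0<..\<rho>}|lborel. u0 x) = (LINT x:{0<..}|lborel. u0 x)"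
proof -
  have "set_integrable lborel {0<..\<rho>} u0" "set_integrable lborel {\<rho><..} u0"
    using assms R by (auto intro!: set_integrable_u0)
  from set_integral_Un[OF _ this]
  have "(LINT x:{0<..\<rho>} \<union> {\<rho><..}|lborel. u0 x)
      = (LINT x:{0<..\<rho>}|lborel. u0 x) + (LINT x:{\<rho><..}|lborel. u0 x)"
    by (simp add: disjoint_iff)
  moreover have "{0<..\<rho>} \<union> {\<rho><..} = {0<..}" using assms R by auto
  ultimately have "(LINT x:{0<..}|lborel. u0 x)
      = (LINT x:{0<..\<rho>}|lborel. u0 x) + (LINT x:{\<rho><..}|lborel. u0 x)" by simp
  moreover have "(LINT x:{\<rho><..}|lborel. u0 x) = 0"
    unfolding set_lebesgue_integral_def
    by (rule integral_eq_zero_AE, use support in eventually_elim) (use assms in \<open>auto simp: indicator_def\<close>)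
  ultimately show ?thesis by simp
qed

lemma finite_mass_solution_of_datum:
  assumes alpha: "\<alpha> > 1" and C: "C > 0"
    and M_def: "M = (LINT x:{0<..}|lborel. u0 x)" and M_pos: "M > 0"
    and sol: "mass_problem_solution \<alpha> (\<lambda>\<rho>. LINT x:{0<..\<rho>}|lborel. u0 x) m"
  shows "finite_mass_solution \<alpha> (\<lambda>\<rho>. LINT x:{0<..\<rho>}|lborel. u0 x) m M
    (Inf {\<rho>. 0 \<le> \<rho> \<and> m 0 \<rho> = M}) C"
proof -
  let ?m0 = "\<lambda>\<rho>. LINT x:{0<..\<rho>}|lborel. u0 x"
  have m0_le: "?m0 \<rho> \<le> M" for \<rho>
    unfolding M_def by (rule set_integral_u0_mono) auto
  have m0_mono: "?m0 a \<le> ?m0 b" if "0 \<le> a" "a \<le> b" for a b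
    by (rule set_integral_u0_mono) (use that in auto)
  have m0_nonneg: "0 \<le> ?m0 \<rho>" if "0 \<le> \<rho>" for \<rho>
    by (rule set_integral_u0_nonneg) auto
  have full: "?m0 R = M" unfolding M_def by (rule set_integral_u0_eq_total) simp
  have level_set: "{\<rho>. 0 \<le> \<rho> \<and> m 0 \<rho> = M} = {\<rho>. 0 \<le> \<rho> \<and> ?m0 \<rho> = M}"
    using sol by (auto simp: mass_problem_solution_def)
  note S0 = Inf_level_set_of_mono[of ?m0 M R, OF m0_mono m0_le R full]
  show ?thesis
    by unfold_locales (simp_all add: alpha sol M_pos C level_set S0 m0_le m0_nonneg set_integral_u0_le_linear)
qed

end

theorem mainTheorem10:
  fixes \<alpha> :: real and u0 :: "real \<Rightarrow> real" and m :: "real \<Rightarrow> real \<Rightarrow> real"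
    and M :: real and S :: "real \<Rightarrow> real"
  assumes alpha: "\<alpha> > 1"
    and u0_meas: "u0 \<in> borel_measurable lborel"
    and u0_Linf: "\<exists>C. AE x in lborel. 0 < x \<longrightarrow> \<bar>u0 x\<bar> \<le> C"
    and u0_nonneg: "AE x in lborel. 0 < x \<longrightarrow> u0 x \<ge> 0"
    and u0_supp: "\<exists>R. AE x in lborel. R < x \<longrightarrow> u0 x = 0"
    and M_def: "M = (LINT x:{0<..}|lborel. u0 x)"
    and M_pos: "M > 0"
    and sol: "mass_problem_solution \<alpha> (\<lambda>\<rho>. LINT x:{0<..\<rho>}|lborel. u0 x) m"
    and S_def: "\<And>t. S t = Inf {\<rho>. \<rho> \<ge> 0 \<and> m t \<rho> = M}"
  shows "(\<forall>t>0. 0 \<le> S t / (M * (\<alpha> * t) powr (1 / \<alpha>)) - 1 \<and>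
                S t / (M * (\<alpha> * t) powr (1 / \<alpha>)) - 1 \<le> S 0 / M * (\<alpha> * t) powr (- 1 / \<alpha>))
       \<and> (\<forall>\<epsilon>>0. \<forall>\<eta>>0. \<forall>\<^sub>F t in at_top. \<forall>y\<ge>\<epsilon>.
            \<bar>m t (M * (\<alpha> * t) powr (1 / \<alpha>) * y) / (M * G_profile y) - 1\<bar> \<le> \<eta>)"
proof -
  from u0_Linf obtain C where "AE x in lborel. 0 < x \<longrightarrow> \<bar>u0 x\<bar> \<le> C" by blast
  then have C: "AE x in lborel. 0 < x \<longrightarrow> \<bar>u0 x\<bar> \<le> max C 1" by eventually_elim auto
  from u0_supp obtain R where "AE x in lborel. R < x \<longrightarrow> u0 x = 0" by blast
  then have R: "AE x in lborel. max R 0 < x \<longrightarrow> u0 x = 0" by eventually_elim auto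
  interpret finite_mass_solution \<alpha> "\<lambda>\<rho>. LINT x:{0<..\<rho>}|lborel. u0 x" m M "S 0" "max C 1"
    unfolding S_def using alpha M_def M_pos sol
    by (intro finite_mass_solution_of_datum[OF u0_meas C u0_nonneg R]) auto
  show ?thesis using front_ratio_bounds[folded S_def] profile_convergence by blast
qed

end
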